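(* Let $\Gamma$ be a non-elementary hyperbolic group endowed with an admissible metric which is strongly hyperbolic, let $C\ge0$ be a rough geodesic constant for this metric, and let $K>2C$. Set $$\Delta=\{(x,y)\in\Gamma\times\Gamma:\ K-C\le|x,y|\le K+C\},$$ on which $\Gamma$ acts by $g.(x,y)=(gx,gy)$, and for $g\in\Gamma$ define $c_g:\Delta\to\mathbb{R}$ by $c_g(x,y)=\langle g,x\rangle-\langle g,y\rangle$, where $\langle\cdot,\cdot\rangle$ is the Gromov product based at the identity. Then for all sufficiently large $p\in[1,\infty)$, one has $c_g\in\ell^p(\Delta)$ for every $g\in\Gamma$, and the affine isometric action of $\Gamma$ on $\ell^p(\Delta)$ given by $(g,\phi)\mapsto g.\phi+c_g$, where $(g.\phi)(x,y)=\phi(g^{-1}x,g^{-1}y)$, is well-defined and proper.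
   Context: Metric notation: $|x,y|$ is the distance, $|g|=|1,g|$, and the Gromov product with basepoint $o$ is $\langle x,y\rangle_o=\tfrac12(|o,x|+|o,y|-|x,y|)$. A metric space is strongly hyperbolic if $e^{-\langle x,y\rangle_o}\le e^{-\langle x,z\rangle_o}+e^{-\langle z,y\rangle_o}$ for all points $x,y,z,o$. A metric on a hyperbolic group $\Gamma$ is admissible if (i) it is left-invariant: $|gx,gy|=|x,y|$; (ii) it is roughly geodesic with constant $C\ge0$: for all $x,y\in\Gamma$ there is a map $\gamma:[a,b]\to\Gamma$ with $\gamma(a)=x$, $\gamma(b)=y$ and $|s-t|-C\le|\gamma(s),\gamma(t)|\le|s-t|+C$ for all $s,t\in[a,b]$; (iii) it is quasi-isometric to a word metric on $\Gamma$. The map $g\mapsto c_g$ satisfies the cocycle identity $c_{gh}=c_g+g.c_h$. The affine isometric action is proper if $\|c_g\|_p\to\infty$ as $g\to\infty$ in $\Gamma$ (equivalently, for every bounded set $B\subset\ell^p(\Delta)$ only finitely many $g$ satisfy $(g\cdot B)\cap B\neq\emptyset$). *)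

theory Defs
  imports "HOL-Analysis.Analysis" "HOL-Algebra.Coset" "HOL-Algebra.Generated_Groups"
begin

definition gromov :: "('a \<Rightarrow> 'a \<Rightarrow> real) \<Rightarrow> 'a \<Rightarrow> 'a \<Rightarrow> 'a \<Rightarrow> real" where
  "gromov d w x y = (d w x + d w y - d x y) / 2"

definition metric_on :: "'a set \<Rightarrow> ('a \<Rightarrow> 'a \<Rightarrow> real) \<Rightarrow> bool" where
  "metric_on X d \<longleftrightarrow>
     (\<forall>x\<in>X. \<forall>y\<in>X. 0 \<le> d x y \<and> (d x y = 0 \<longleftrightarrow> x = y) \<and> d x y = d y x) \<and>
     (\<forall>x\<in>X. \<forall>y\<in>X. \<forall>z\<in>X. d x z \<le> d x y + d y z)"

definition word_length :: "('a, 'b) monoid_scheme \<Rightarrow> 'a set \<Rightarrow> 'a \<Rightarrow> nat" where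
  "word_length G S g = (LEAST n. \<exists>l. length l = n \<and> set l \<subseteq> S \<union> (\<lambda>s. inv\<^bsub>G\<^esub> s) ` S
                                      \<and> g = foldr (\<lambda>a b. a \<otimes>\<^bsub>G\<^esub> b) l \<one>\<^bsub>G\<^esub>)"

definition word_metric :: "('a, 'b) monoid_scheme \<Rightarrow> 'a set \<Rightarrow> 'a \<Rightarrow> 'a \<Rightarrow> real" where
  "word_metric G S x y = real (word_length G S (inv\<^bsub>G\<^esub> x \<otimes>\<^bsub>G\<^esub> y))"

definition finite_generating_set :: "('a, 'b) monoid_scheme \<Rightarrow> 'a set \<Rightarrow> bool" where
  "finite_generating_set G S \<longleftrightarrow> finite S \<and> S \<subseteq> carrier G \<and> generate G S = carrier G"

definition delta_hyperbolic :: "'a set \<Rightarrow> ('a \<Rightarrow> 'a \<Rightarrow> real) \<Rightarrow> real \<Rightarrow> bool" where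
  "delta_hyperbolic X d \<delta> \<longleftrightarrow>
     (\<forall>w\<in>X. \<forall>x\<in>X. \<forall>y\<in>X. \<forall>z\<in>X.
        gromov d w x y \<ge> min (gromov d w x z) (gromov d w z y) - \<delta>)"

definition hyperbolic_group :: "('a, 'b) monoid_scheme \<Rightarrow> bool" where
  "hyperbolic_group G \<longleftrightarrow> group G \<and>
     (\<exists>S \<delta>. finite_generating_set G S \<and> delta_hyperbolic (carrier G) (word_metric G S) \<delta>)"

definition virtually_cyclic :: "('a, 'b) monoid_scheme \<Rightarrow> bool" where
  "virtually_cyclic G \<longleftrightarrow>
     (\<exists>a\<in>carrier G. finite (rcosets\<^bsub>G\<^esub> (generate G {a})))"

definition non_elementary_hyperbolic :: "('a, 'b) monoid_scheme \<Rightarrow> bool" where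
  "non_elementary_hyperbolic G \<longleftrightarrow> hyperbolic_group G \<and> \<not> virtually_cyclic G"

definition strongly_hyperbolic :: "'a set \<Rightarrow> ('a \<Rightarrow> 'a \<Rightarrow> real) \<Rightarrow> bool" where
  "strongly_hyperbolic X d \<longleftrightarrow>
     (\<forall>x\<in>X. \<forall>y\<in>X. \<forall>z\<in>X. \<forall>w\<in>X.
        exp (- gromov d w x y) \<le> exp (- gromov d w x z) + exp (- gromov d w z y))"

definition left_invariant :: "('a, 'b) monoid_scheme \<Rightarrow> ('a \<Rightarrow> 'a \<Rightarrow> real) \<Rightarrow> bool" where
  "left_invariant G d \<longleftrightarrow>
     (\<forall>g\<in>carrier G. \<forall>x\<in>carrier G. \<forall>y\<in>carrier G. d (g \<otimes>\<^bsub>G\<^esub> x) (g \<otimes>\<^bsub>G\<^esub> y) = d x y)"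

definition roughly_geodesic :: "'a set \<Rightarrow> ('a \<Rightarrow> 'a \<Rightarrow> real) \<Rightarrow> real \<Rightarrow> bool" where
  "roughly_geodesic X d C \<longleftrightarrow>
     (\<forall>x\<in>X. \<forall>y\<in>X. \<exists>(a::real) b (\<gamma>::real \<Rightarrow> 'a). a \<le> b \<and> \<gamma> a = x \<and> \<gamma> b = y \<and>
        \<gamma> ` {a..b} \<subseteq> X \<and>
        (\<forall>s\<in>{a..b}. \<forall>t\<in>{a..b}. \<bar>s - t\<bar> - C \<le> d (\<gamma> s) (\<gamma> t) \<and> d (\<gamma> s) (\<gamma> t) \<le> \<bar>s - t\<bar> + C))"

definition quasi_isometric_metrics :: "'a set \<Rightarrow> ('a \<Rightarrow> 'a \<Rightarrow> real) \<Rightarrow> ('a \<Rightarrow> 'a \<Rightarrow> real) \<Rightarrow> bool" where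
  "quasi_isometric_metrics X d d' \<longleftrightarrow>
     (\<exists>L A. L \<ge> 1 \<and> A \<ge> 0 \<and> (\<forall>x\<in>X. \<forall>y\<in>X.
        d' x y / L - A \<le> d x y \<and> d x y \<le> L * d' x y + A))"

definition admissible_metric :: "('a, 'b) monoid_scheme \<Rightarrow> ('a \<Rightarrow> 'a \<Rightarrow> real) \<Rightarrow> bool" where
  "admissible_metric G d \<longleftrightarrow> metric_on (carrier G) d \<and> left_invariant G d \<and>
     (\<exists>C\<ge>0. roughly_geodesic (carrier G) d C) \<and>
     (\<exists>S. finite_generating_set G S \<and> quasi_isometric_metrics (carrier G) d (word_metric G S))"

text \<open>l^p on a set D of indices, for real valued functions (values outside D ignored).\<close>
definition in_lp :: "real \<Rightarrow> 'c set \<Rightarrow> ('c \<Rightarrow> real) \<Rightarrow> bool" where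
  "in_lp p D \<phi> \<longleftrightarrow> (\<lambda>z. \<bar>\<phi> z\<bar> powr p) summable_on D"

definition lp_norm :: "real \<Rightarrow> 'c set \<Rightarrow> ('c \<Rightarrow> real) \<Rightarrow> real" where
  "lp_norm p D \<phi> = (\<Sum>\<^sub>\<infinity>z\<in>D. \<bar>\<phi> z\<bar> powr p) powr (1 / p)"

definition pair_translate :: "('a, 'b) monoid_scheme \<Rightarrow> 'a \<Rightarrow> ('a \<times> 'a \<Rightarrow> real) \<Rightarrow> 'a \<times> 'a \<Rightarrow> real" where
  "pair_translate G g \<phi> = (\<lambda>(x, y). \<phi> (inv\<^bsub>G\<^esub> g \<otimes>\<^bsub>G\<^esub> x, inv\<^bsub>G\<^esub> g \<otimes>\<^bsub>G\<^esub> y))"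

definition busemann_cocycle :: "('a, 'b) monoid_scheme \<Rightarrow> ('a \<Rightarrow> 'a \<Rightarrow> real) \<Rightarrow> 'a \<Rightarrow> 'a \<times> 'a \<Rightarrow> real" where
  "busemann_cocycle G d g = (\<lambda>(x, y). gromov d \<one>\<^bsub>G\<^esub> g x - gromov d \<one>\<^bsub>G\<^esub> g y)"

definition affine_action :: "('a, 'b) monoid_scheme \<Rightarrow> ('a \<Rightarrow> 'a \<Rightarrow> real) \<Rightarrow> 'a \<Rightarrow> ('a \<times> 'a \<Rightarrow> real) \<Rightarrow> 'a \<times> 'a \<Rightarrow> real" where
  "affine_action G d g \<phi> = (\<lambda>z. pair_translate G g \<phi> z + busemann_cocycle G d g z)"

end

theory Submission
  imports Defs
begin

(* For z = (x, y) in the band \<Delta>, strong hyperbolicity gives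
   |c_g(z)| \<le> e^|g| e^-<x,y>, and <x,y> \<ge> |x| - (K + C). The band is covered by finitely many
   diagonal translates {(x, xu)}, and balls of \<Gamma> grow at most exponentially, so c_g \<in> l^p as soon as
   p exceeds the growth rate. For properness, sample a rough geodesic from 1 to g at spacing K:
   the roughly |g|/K consecutive pairs lie in \<Delta> and satisfy |c_g| \<ge> K - 2C there, so a bound on
   the l^p norm of c_g bounds |g|, and balls are finite. The remaining assertions are the cocycle
   identity and the invariance of \<Delta> under the diagonal action. *)

lemma summable_on_comparison_nonneg:
  fixes f g :: "'b \<Rightarrow> real"
  assumes "g summable_on A" and "\<And>x. x \<in> A \<Longrightarrow> f x \<le> g x" and "\<And>x. x \<in> A \<Longrightarrow> 0 \<le> f x"
  shows "f summable_on A"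
proof -
  have "(\<lambda>x. norm (g x)) summable_on A"
    using assms(1) summable_on_iff_abs_summable_on_real by blast
  then have "(\<lambda>x. norm (f x)) summable_on A"
    by (rule Infinite_Sum.abs_summable_on_comparison_test) (use assms in force)
  then show ?thesis
    using summable_on_iff_abs_summable_on_real by blast
qed

lemma summable_on_finite_UN:
  fixes f :: "'b \<Rightarrow> real"
  assumes "finite I" and "\<And>i. i \<in> I \<Longrightarrow> f summable_on A i"
  shows "f summable_on (\<Union>i\<in>I. A i)"
  using assms by (induction I rule: finite_induct) (auto intro: summable_on_union)

lemma summable_on_power_of_growth:
  fixes l :: "'b \<Rightarrow> nat" and q :: real
  assumes fin: "\<And>n. finite {x\<in>X. l x = n}" and card: "\<And>n. card {x\<in>X. l x = n} \<le> m ^ n"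
    and q: "0 \<le> q" "q * m < 1"
  shows "(\<lambda>x. q ^ l x) summable_on X"
proof (rule nonneg_bdd_above_summable_on)
  show "bdd_above ((\<lambda>F. \<Sum>x\<in>F. q ^ l x) ` {F. F \<subseteq> X \<and> finite F})"
  proof (rule bdd_aboveI2)
    fix F assume F: "F \<in> {F. F \<subseteq> X \<and> finite F}"
    have "(\<Sum>x\<in>F. q ^ l x) = (\<Sum>n\<in>l ` F. \<Sum>x\<in>{x\<in>F. l x = n}. q ^ l x)"
      using F by (intro sum.image_gen) auto
    also have "\<dots> = (\<Sum>n\<in>l ` F. real (card {x\<in>F. l x = n}) * q ^ n)"
      by (intro sum.cong refl) simp
    also have "\<dots> \<le> (\<Sum>n\<in>l ` F. (q * m) ^ n)"
    proof (intro sum_mono)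
      fix n
      have "card {x\<in>F. l x = n} \<le> m ^ n"
        using F fin card_mono[of "{x\<in>X. l x = n}" "{x\<in>F. l x = n}"] card[of n] by fastforce
      then have "real (card {x\<in>F. l x = n}) \<le> real m ^ n"
        by (metis of_nat_le_iff of_nat_power)
      then show "real (card {x\<in>F. l x = n}) * q ^ n \<le> (q * m) ^ n"
        using q by (simp add: power_mult_distrib mult.commute mult_left_mono)
    qed
    also have "\<dots> \<le> (\<Sum>n. (q * m) ^ n)"
      using F q by (intro sum_le_suminf summable_geometric) auto
    finally show "(\<Sum>x\<in>F. q ^ l x) \<le> (\<Sum>n. (q * m) ^ n)" .
  qed
qed (use q in simp)

lemma abs_add_powr_le:
  fixes a b p :: real
  assumes "0 \<le> p"
  shows "\<bar>a + b\<bar> powr p \<le> 2 powr p * (\<bar>a\<bar> powr p + \<bar>b\<bar> powr p)"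
proof -
  have "\<bar>a + b\<bar> powr p \<le> (2 * max \<bar>a\<bar> \<bar>b\<bar>) powr p"
    using assms by (intro powr_mono2) auto
  also have "\<dots> = 2 powr p * max \<bar>a\<bar> \<bar>b\<bar> powr p"
    by (simp add: powr_mult)
  also have "\<dots> \<le> 2 powr p * (\<bar>a\<bar> powr p + \<bar>b\<bar> powr p)"
    by (intro mult_left_mono) (auto simp: max_def)
  finally show ?thesis .
qed

lemma in_lp_add:
  assumes "0 \<le> p" and "in_lp p D \<phi>" and "in_lp p D \<psi>"
  shows "in_lp p D (\<lambda>z. \<phi> z + \<psi> z)"
proof -
  have "(\<lambda>z. 2 powr p * (\<bar>\<phi> z\<bar> powr p + \<bar>\<psi> z\<bar> powr p)) summable_on D"
    using assms by (intro summable_on_cmult_right summable_on_add) (auto simp: in_lp_def)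
  then show ?thesis
    unfolding in_lp_def by (rule summable_on_comparison_nonneg) (use abs_add_powr_le assms in auto)
qed

lemma sum_powr_le_lp_norm_powr:
  assumes "0 < p" and "in_lp p D \<phi>" and "finite P" and "P \<subseteq> D"
  shows "(\<Sum>z\<in>P. \<bar>\<phi> z\<bar> powr p) \<le> lp_norm p D \<phi> powr p"
proof -
  have "(\<Sum>z\<in>P. \<bar>\<phi> z\<bar> powr p) \<le> (\<Sum>\<^sub>\<infinity>z\<in>D. \<bar>\<phi> z\<bar> powr p)"
    using assms by (intro finite_sum_le_infsum) (auto simp: in_lp_def)
  also have "\<dots> = lp_norm p D \<phi> powr p"
    using assms(1) by (simp add: lp_norm_def powr_powr infsum_nonneg)
  finally show ?thesis .
qed

lemma abs_diff_le_of_exp_neg_triangle: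
  fixes a b c B :: real
  assumes "exp (- a) \<le> exp (- c) + exp (- b)" and "exp (- b) \<le> exp (- c) + exp (- a)"
    and "a \<le> B" and "b \<le> B"
  shows "\<bar>a - b\<bar> \<le> exp B * exp (- c)"
proof -
  have "v - u \<le> exp B * exp (- c)"
    if "u \<le> v" "exp (- u) \<le> exp (- c) + exp (- v)" "v \<le> B" for u v
  proof -
    have "v - u \<le> exp (v - u) - 1"
      using exp_ge_add_one_self[of "v - u"] by linarith
    also have "\<dots> = exp v * (exp (- u) - exp (- v))"
      by (simp add: algebra_simps exp_diff exp_minus field_simps)
    also have "\<dots> \<le> exp B * exp (- c)"
      using that by (intro mult_mono) auto
    finally show ?thesis .
  qed
  from this[of a b] this[of b a] assms show ?thesis
    by (cases "a \<le> b") auto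
qed

lemma gromov_commute:
  assumes "metric_on X d" and "w \<in> X" "x \<in> X" "y \<in> X"
  shows "gromov d w x y = gromov d w y x"
proof -
  have "d x y = d y x"
    using assms unfolding metric_on_def by blast
  then show ?thesis
    unfolding gromov_def by simp
qed

lemma gromov_le_dist:
  assumes "metric_on X d" and "w \<in> X" "x \<in> X" "y \<in> X"
  shows "gromov d w x y \<le> d w x"
proof -
  have "d w y \<le> d w x + d x y"
    using assms unfolding metric_on_def by blast
  then show ?thesis
    unfolding gromov_def by simp
qed

lemma dist_diff_le_gromov:
  assumes "metric_on X d" and "w \<in> X" "x \<in> X" "y \<in> X"
  shows "d w x - d x y \<le> gromov d w x y"
proof -
  have "d w x \<le> d w y + d y x" and "d y x = d x y"
    using assms unfolding metric_on_def by blast+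
  then show ?thesis
    unfolding gromov_def by simp
qed

lemma strongly_hyperbolic_gromov_diff_le:
  assumes M: "metric_on X d" and SH: "strongly_hyperbolic X d"
    and X: "w \<in> X" "g \<in> X" "x \<in> X" "y \<in> X"
  shows "\<bar>gromov d w g x - gromov d w g y\<bar> \<le> exp (d w g) * exp (- gromov d w x y)"
proof (rule abs_diff_le_of_exp_neg_triangle)
  have "exp (- gromov d w x g) \<le> exp (- gromov d w x y) + exp (- gromov d w y g)"
    and "exp (- gromov d w y g) \<le> exp (- gromov d w y x) + exp (- gromov d w x g)"
    using SH X unfolding strongly_hyperbolic_def by blast+
  then show "exp (- gromov d w g x) \<le> exp (- gromov d w x y) + exp (- gromov d w g y)"
    and "exp (- gromov d w g y) \<le> exp (- gromov d w x y) + exp (- gromov d w g x)"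
    using gromov_commute[OF M] X by metis+
  show "gromov d w g x \<le> d w g" "gromov d w g y \<le> d w g"
    using gromov_le_dist[OF M] X by auto
qed

context group
begin

lemma foldr_mult_closed:
  "set l \<subseteq> carrier G \<Longrightarrow> foldr (\<otimes>) l \<one> \<in> carrier G"
  by (induction l) auto

lemma foldr_mult_append:
  assumes "set l1 \<subseteq> carrier G" and "set l2 \<subseteq> carrier G"
  shows "foldr (\<otimes>) (l1 @ l2) \<one> = foldr (\<otimes>) l1 \<one> \<otimes> foldr (\<otimes>) l2 \<one>"
  using assms by (induction l1) (auto simp: m_assoc foldr_mult_closed)

lemma generate_imp_word:
  assumes "S \<subseteq> carrier G" and "x \<in> generate G S"
  shows "\<exists>l. set l \<subseteq> S \<union> m_inv G ` S \<and> x = foldr (\<otimes>) l \<one>"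
  using assms(2)
proof (induction rule: generate.induct)
  case one
  show ?case by (intro exI[of _ "[]"]) auto
next
  case (incl h)
  then show ?case by (intro exI[of _ "[h]"]) (use assms(1) in auto)
next
  case (inv h)
  then show ?case by (intro exI[of _ "[inv h]"]) (use assms(1) in auto)
next
  case (eng h1 h2)
  then obtain l1 l2 where l: "set l1 \<subseteq> S \<union> m_inv G ` S" "h1 = foldr (\<otimes>) l1 \<one>"
    "set l2 \<subseteq> S \<union> m_inv G ` S" "h2 = foldr (\<otimes>) l2 \<one>" by blast
  moreover have "S \<union> m_inv G ` S \<subseteq> carrier G"
    using assms(1) by auto
  ultimately have "set l1 \<subseteq> carrier G" and "set l2 \<subseteq> carrier G"
    by auto
  then have "h1 \<otimes> h2 = foldr (\<otimes>) (l1 @ l2) \<one>"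
    using l foldr_mult_append[of l1 l2] by simp
  then show ?case
    using l by (intro exI[of _ "l1 @ l2"]) auto
qed

lemma word_length_witness:
  assumes "finite_generating_set G S" and "x \<in> carrier G"
  shows "\<exists>l. length l = word_length G S x \<and> set l \<subseteq> S \<union> m_inv G ` S \<and> x = foldr (\<otimes>) l \<one>"
proof -
  have "\<exists>n l. length l = n \<and> set l \<subseteq> S \<union> m_inv G ` S \<and> x = foldr (\<otimes>) l \<one>"
    using assms generate_imp_word unfolding finite_generating_set_def by blast
  then show ?thesis
    unfolding word_length_def by (rule LeastI_ex)
qed

lemma word_length_level_subset:
  assumes "finite_generating_set G S"
  shows "{x\<in>carrier G. word_length G S x = n}
    \<subseteq> (\<lambda>l. foldr (\<otimes>) l \<one>) ` {l. set l \<subseteq> S \<union> m_inv G ` S \<and> length l = n}"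
  using word_length_witness[OF assms] by fastforce

lemma finite_word_length_level:
  assumes "finite_generating_set G S"
  shows "finite {x\<in>carrier G. word_length G S x = n}"
  by (rule finite_subset[OF word_length_level_subset[OF assms]])
    (use assms in \<open>simp add: finite_generating_set_def finite_lists_length_eq\<close>)

lemma card_word_length_level_le:
  assumes "finite_generating_set G S"
  shows "card {x\<in>carrier G. word_length G S x = n} \<le> card (S \<union> m_inv G ` S) ^ n"
proof -
  let ?L = "{l. set l \<subseteq> S \<union> m_inv G ` S \<and> length l = n}"
  have fin: "finite ?L"
    using assms by (simp add: finite_generating_set_def finite_lists_length_eq)
  have "card {x\<in>carrier G. word_length G S x = n} \<le> card ((\<lambda>l. foldr (\<otimes>) l \<one>) ` ?L)"
    using fin by (intro card_mono word_length_level_subset[OF assms]) auto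
  also have "\<dots> \<le> card ?L"
    using fin by (rule card_image_le)
  also have "\<dots> = card (S \<union> m_inv G ` S) ^ n"
    using assms by (simp add: finite_generating_set_def card_lists_length_eq)
  finally show ?thesis .
qed

lemma finite_word_length_le:
  assumes "finite_generating_set G S"
  shows "finite {x\<in>carrier G. word_length G S x \<le> N}"
proof -
  have "{x\<in>carrier G. word_length G S x \<le> N} = (\<Union>n\<le>N. {x\<in>carrier G. word_length G S x = n})"
    by auto
  then show ?thesis
    using finite_word_length_level[OF assms] by simp
qed

lemma quasi_isometric_word_length_bound:
  assumes "quasi_isometric_metrics (carrier G) d (word_metric G S)"
  obtains L A where "L > 0" and "\<And>x. x \<in> carrier G \<Longrightarrow> real (word_length G S x) \<le> L * (d \<one> x + A)"
proof -
  obtain L A where L: "L \<ge> 1"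
    and QI: "\<And>x. x \<in> carrier G \<Longrightarrow> word_metric G S \<one> x / L - A \<le> d \<one> x"
    using assms unfolding quasi_isometric_metrics_def by blast
  have "real (word_length G S x) \<le> L * (d \<one> x + A)" if "x \<in> carrier G" for x
    using QI[OF that] L that by (simp add: word_metric_def field_simps)
  moreover have "L > 0"
    using L by simp
  ultimately show ?thesis
    using that by blast
qed

lemma finite_dist_one_le:
  assumes "finite_generating_set G S" and "quasi_isometric_metrics (carrier G) d (word_metric G S)"
  shows "finite {x\<in>carrier G. d \<one> x \<le> R}"
proof -
  obtain L A where L: "L > 0"
    and wl: "\<And>x. x \<in> carrier G \<Longrightarrow> real (word_length G S x) \<le> L * (d \<one> x + A)"
    using quasi_isometric_word_length_bound[OF assms(2)] by blast
  have "{x\<in>carrier G. d \<one> x \<le> R} \<subseteq> {x\<in>carrier G. word_length G S x \<le> nat \<lceil>L * (R + A)\<rceil>}"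
  proof safe
    fix x assume "x \<in> carrier G" "d \<one> x \<le> R"
    then have "real (word_length G S x) \<le> L * (R + A)"
      using wl L by (smt (verit) mult_left_mono)
    then show "word_length G S x \<le> nat \<lceil>L * (R + A)\<rceil>"
      by linarith
  qed
  then show ?thesis
    using finite_word_length_le[OF assms(1)] by (rule finite_subset)
qed

lemma summable_exp_neg_dist_one:
  assumes S: "finite_generating_set G S" and QI: "quasi_isometric_metrics (carrier G) d (word_metric G S)"
  obtains p0 where "p0 \<ge> 1" and "\<And>p. p \<ge> p0 \<Longrightarrow> (\<lambda>x. exp (- p * d \<one> x)) summable_on carrier G"
proof -
  obtain L A where L: "L > 0"
    and wl: "\<And>x. x \<in> carrier G \<Longrightarrow> real (word_length G S x) \<le> L * (d \<one> x + A)"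
    using quasi_isometric_word_length_bound[OF QI] by blast
  define m where "m = card (S \<union> m_inv G ` S)"
  have "(\<lambda>x. exp (- p * d \<one> x)) summable_on carrier G" if p: "p \<ge> max 1 (L * ln (m + 1))" for p
  proof -
    define q where "q = exp (- p / L)"
    have "ln (m + 1) \<le> p / L"
      using p L by (simp add: field_simps)
    then have "q \<le> exp (- ln (m + 1))"
      unfolding q_def by simp
    also have "\<dots> = 1 / (m + 1)"
      by (simp add: exp_minus inverse_eq_divide)
    finally have "q * m \<le> m / (m + 1)"
      using mult_right_mono[of q "1 / (m + 1)" "real m"] by simp
    also have "\<dots> < 1"
      by simp
    finally have "q * m < 1" .
    then have "(\<lambda>x. exp (p * A) * q ^ word_length G S x) summable_on carrier G"
      using finite_word_length_level[OF S] card_word_length_level_le[OF S]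
      by (intro summable_on_cmult_right summable_on_power_of_growth) (auto simp: q_def m_def)
    moreover have "exp (- p * d \<one> x) \<le> exp (p * A) * q ^ word_length G S x" if "x \<in> carrier G" for x
    proof -
      have "p * (real (word_length G S x) / L) \<le> p * (d \<one> x + A)"
        using wl[OF that] L p by (intro mult_left_mono) (auto simp: field_simps)
      then have "exp (- p * d \<one> x) \<le> exp (p * A + real (word_length G S x) * (- p / L))"
        by (simp add: algebra_simps)
      also have "\<dots> = exp (p * A) * q ^ word_length G S x"
        unfolding q_def exp_add by (simp only: exp_of_nat_mult)
      finally show ?thesis .
    qed
    ultimately show ?thesis
      by (rule summable_on_comparison_nonneg) auto
  qed
  then show ?thesis
    using that[of "max 1 (L * ln (m + 1))"] by simp
qed

end

definition dist_band :: "('a, 'b) monoid_scheme \<Rightarrow> ('a \<Rightarrow> 'a \<Rightarrow> real) \<Rightarrow> real \<Rightarrow> real \<Rightarrow> ('a \<times> 'a) set" where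
  "dist_band G d r s = {(x, y). x \<in> carrier G \<and> y \<in> carrier G \<and> r \<le> d x y \<and> d x y \<le> s}"

definition pair_shift :: "('a, 'b) monoid_scheme \<Rightarrow> 'a \<Rightarrow> 'a \<times> 'a \<Rightarrow> 'a \<times> 'a" where
  "pair_shift G g = (\<lambda>(x, y). (g \<otimes>\<^bsub>G\<^esub> x, g \<otimes>\<^bsub>G\<^esub> y))"

lemma pair_translate_eq_pair_shift:
  "pair_translate G g \<phi> z = \<phi> (pair_shift G (inv\<^bsub>G\<^esub> g) z)"
  by (cases z) (simp add: pair_translate_def pair_shift_def)

lemma in_lp_pair_translate:
  assumes "bij_betw (pair_shift G (inv\<^bsub>G\<^esub> g)) D D" and "in_lp p D \<phi>"
  shows "in_lp p D (pair_translate G g \<phi>)"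
  using assms summable_on_reindex_bij_betw[OF assms(1), of "\<lambda>z. \<bar>\<phi> z\<bar> powr p"]
  by (simp add: in_lp_def pair_translate_eq_pair_shift)

lemma lp_norm_pair_translate:
  assumes "bij_betw (pair_shift G (inv\<^bsub>G\<^esub> g)) D D"
  shows "lp_norm p D (pair_translate G g \<phi>) = lp_norm p D \<phi>"
  using infsum_reindex_bij_betw[OF assms, of "\<lambda>z. \<bar>\<phi> z\<bar> powr p"]
  by (simp add: lp_norm_def pair_translate_eq_pair_shift)

lemma affine_action_diff:
  "(\<lambda>z. affine_action G d g \<phi> z - affine_action G d g \<psi> z) = pair_translate G g (\<lambda>z. \<phi> z - \<psi> z)"
  by (auto simp: affine_action_def pair_translate_def)

lemma busemann_cocycle_along_rough_geodesic:
  assumes "\<gamma> a = \<one>\<^bsub>G\<^esub>" and "\<gamma> b = g"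
    and rg: "\<And>s t. s \<in> {a..b} \<Longrightarrow> t \<in> {a..b} \<Longrightarrow>
      \<bar>s - t\<bar> - C \<le> d (\<gamma> s) (\<gamma> t) \<and> d (\<gamma> s) (\<gamma> t) \<le> \<bar>s - t\<bar> + C"
    and "s \<in> {a..b}" and "t \<in> {a..b}" and "s \<le> t"
  shows "t - s - 2 * C \<le> \<bar>busemann_cocycle G d g (\<gamma> s, \<gamma> t)\<bar>"
proof -
  have "d (\<gamma> a) (\<gamma> s) \<le> s - a + C" and "b - s - C \<le> d (\<gamma> b) (\<gamma> s)"
    and "t - a - C \<le> d (\<gamma> a) (\<gamma> t)" and "d (\<gamma> b) (\<gamma> t) \<le> b - t + C"
    using rg[of a s] rg[of b s] rg[of a t] rg[of b t] assms(4-6) by auto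
  then have "busemann_cocycle G d g (\<gamma> s, \<gamma> t) \<le> s - t + 2 * C"
    using assms(1,2) by (simp add: busemann_cocycle_def gromov_def field_simps)
  then show ?thesis
    by linarith
qed

lemma rough_geodesic_distinct:
  assumes "metric_on X d" and "\<gamma> ` {a..b} \<subseteq> X"
    and rg: "\<And>s t. s \<in> {a..b} \<Longrightarrow> t \<in> {a..b} \<Longrightarrow> \<bar>s - t\<bar> - C \<le> d (\<gamma> s) (\<gamma> t)"
    and "s \<in> {a..b}" "t \<in> {a..b}" and "C < \<bar>s - t\<bar>"
  shows "\<gamma> s \<noteq> \<gamma> t"
proof
  assume eq: "\<gamma> s = \<gamma> t"
  have "d (\<gamma> s) (\<gamma> t) = 0"
    using assms(1,2,5) unfolding eq metric_on_def by blast
  then show False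
    using rg[OF assms(4,5)] assms(6) by linarith
qed

lemma rough_geodesic_pair_in_dist_band:
  assumes "\<gamma> ` {a..b} \<subseteq> carrier G"
    and rg: "\<And>s t. s \<in> {a..b} \<Longrightarrow> t \<in> {a..b} \<Longrightarrow>
      \<bar>s - t\<bar> - C \<le> d (\<gamma> s) (\<gamma> t) \<and> d (\<gamma> s) (\<gamma> t) \<le> \<bar>s - t\<bar> + C"
    and "s \<in> {a..b}" "t \<in> {a..b}" and "\<bar>s - t\<bar> = K"
  shows "(\<gamma> s, \<gamma> t) \<in> dist_band G d (K - C) (K + C)"
  using assms rg[OF assms(3,4)] by (auto simp: dist_band_def)

context group
begin

lemma left_invariantD:
  assumes "left_invariant G d" and "g \<in> carrier G" "x \<in> carrier G" "y \<in> carrier G"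
  shows "d (g \<otimes> x) (g \<otimes> y) = d x y"
  using assms unfolding left_invariant_def by blast

lemma dist_inv_mult:
  assumes "left_invariant G d" and "g \<in> carrier G" "u \<in> carrier G" "x \<in> carrier G"
  shows "d u (inv g \<otimes> x) = d (g \<otimes> u) x"
  using left_invariantD[OF assms(1,2,3), of "inv g \<otimes> x"] assms(2,4)
  by (simp add: m_assoc[symmetric])

lemma pair_shift_mult:
  assumes "g \<in> carrier G" "h \<in> carrier G" and "z \<in> carrier G \<times> carrier G"
  shows "pair_shift G (g \<otimes> h) z = pair_shift G g (pair_shift G h z)"
  using assms by (auto simp: pair_shift_def m_assoc)

lemma bij_betw_pair_shift_dist_band:
  assumes "left_invariant G d" and "g \<in> carrier G"
  shows "bij_betw (pair_shift G g) (dist_band G d r s) (dist_band G d r s)"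
proof (rule bij_betwI[where g = "pair_shift G (inv g)"])
  have "pair_shift G u \<in> dist_band G d r s \<rightarrow> dist_band G d r s" if "u \<in> carrier G" for u
    using left_invariantD[OF assms(1) that] that by (auto simp: pair_shift_def dist_band_def)
  then show "pair_shift G g \<in> dist_band G d r s \<rightarrow> dist_band G d r s"
    and "pair_shift G (inv g) \<in> dist_band G d r s \<rightarrow> dist_band G d r s"
    using assms(2) by auto
  show "pair_shift G (inv g) (pair_shift G g z) = z" and "pair_shift G g (pair_shift G (inv g) z) = z"
    if "z \<in> dist_band G d r s" for z
    using that assms(2) by (auto simp: pair_shift_def dist_band_def m_assoc[symmetric])
qed

lemma busemann_cocycle_one:
  assumes "metric_on (carrier G) d" and "z \<in> carrier G \<times> carrier G"
  shows "busemann_cocycle G d \<one> z = 0"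
proof -
  have "d \<one> \<one> = 0"
    using assms(1) one_closed unfolding metric_on_def by blast
  then show ?thesis
    by (cases z) (simp add: busemann_cocycle_def gromov_def)
qed

lemma busemann_cocycle_mult:
  assumes LI: "left_invariant G d" and g: "g \<in> carrier G" and h: "h \<in> carrier G"
    and z: "z \<in> carrier G \<times> carrier G"
  shows "busemann_cocycle G d (g \<otimes> h) z
    = pair_translate G g (busemann_cocycle G d h) z + busemann_cocycle G d g z"
proof -
  obtain x y where xy: "z = (x, y)" "x \<in> carrier G" "y \<in> carrier G"
    using z by auto
  have "d g (g \<otimes> h) = d \<one> h"
    using left_invariantD[OF LI g one_closed h] g by simp
  moreover have "d \<one> (inv g \<otimes> w) = d g w" and "d h (inv g \<otimes> w) = d (g \<otimes> h) w"
    if "w \<in> carrier G" for w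
    using dist_inv_mult[OF LI g _ that] g h by auto
  ultimately show ?thesis
    using xy by (simp add: busemann_cocycle_def pair_translate_def gromov_def field_simps)
qed

lemma affine_action_one:
  assumes "metric_on (carrier G) d" and "z \<in> carrier G \<times> carrier G"
  shows "affine_action G d \<one> \<phi> z = \<phi> z"
  using assms(2) busemann_cocycle_one[OF assms]
  by (cases z) (simp add: affine_action_def pair_translate_def)

lemma affine_action_mult:
  assumes "left_invariant G d" and "g \<in> carrier G" "h \<in> carrier G" and "z \<in> carrier G \<times> carrier G"
  shows "affine_action G d (g \<otimes> h) \<phi> z = affine_action G d g (affine_action G d h \<phi>) z"
proof -
  have "pair_shift G (inv (g \<otimes> h)) z = pair_shift G (inv h) (pair_shift G (inv g) z)"
    using assms by (simp add: inv_mult_group pair_shift_mult)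
  then show ?thesis
    using busemann_cocycle_mult[OF assms]
    by (simp add: affine_action_def pair_translate_eq_pair_shift)
qed

lemma busemann_cocycle_abs_le:
  assumes M: "metric_on (carrier G) d" and SH: "strongly_hyperbolic (carrier G) d"
    and g: "g \<in> carrier G" and xy: "(x, y) \<in> dist_band G d r s"
  shows "\<bar>busemann_cocycle G d g (x, y)\<bar> \<le> exp (d \<one> g + s) * exp (- d \<one> x)"
proof -
  have x: "x \<in> carrier G" and y: "y \<in> carrier G" and "d x y \<le> s"
    using xy by (auto simp: dist_band_def)
  have "\<bar>busemann_cocycle G d g (x, y)\<bar> \<le> exp (d \<one> g) * exp (- gromov d \<one> x y)"
    using strongly_hyperbolic_gromov_diff_le[OF M SH one_closed g x y]
    by (simp add: busemann_cocycle_def)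
  also have "\<dots> \<le> exp (d \<one> g) * exp (s - d \<one> x)"
    using dist_diff_le_gromov[OF M one_closed x y] \<open>d x y \<le> s\<close> by simp
  also have "\<dots> = exp (d \<one> g + s) * exp (- d \<one> x)"
    by (simp flip: exp_add)
  finally show ?thesis .
qed

lemma dist_band_subset_UN:
  assumes "left_invariant G d"
  shows "dist_band G d r s \<subseteq> (\<Union>u\<in>{u\<in>carrier G. d \<one> u \<le> s}. (\<lambda>x. (x, x \<otimes> u)) ` carrier G)"
proof
  fix z assume "z \<in> dist_band G d r s"
  then obtain x y where z: "z = (x, y)" and x: "x \<in> carrier G" and y: "y \<in> carrier G"
    and "d x y \<le> s"
    by (auto simp: dist_band_def)
  then have "d \<one> (inv x \<otimes> y) \<le> s"
    using dist_inv_mult[OF assms x one_closed y] x by simp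
  moreover have "z = (x, x \<otimes> (inv x \<otimes> y))"
    using x y z by (simp add: m_assoc[symmetric])
  ultimately show "z \<in> (\<Union>u\<in>{u\<in>carrier G. d \<one> u \<le> s}. (\<lambda>x. (x, x \<otimes> u)) ` carrier G)"
    using x y by blast
qed

lemma summable_on_dist_band:
  fixes f :: "'a \<Rightarrow> real"
  assumes "left_invariant G d" and "finite {u\<in>carrier G. d \<one> u \<le> s}"
    and "f summable_on carrier G"
  shows "(\<lambda>z. f (fst z)) summable_on dist_band G d r s"
proof (rule summable_on_subset_banach[OF _ dist_band_subset_UN[OF assms(1)]])
  show "(\<lambda>z. f (fst z)) summable_on (\<Union>u\<in>{u\<in>carrier G. d \<one> u \<le> s}. (\<lambda>x. (x, x \<otimes> u)) ` carrier G)"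
  proof (rule summable_on_finite_UN[OF assms(2)])
    fix u
    have "inj_on (\<lambda>x. (x, x \<otimes> u)) (carrier G)"
      by (rule inj_onI) simp
    then show "(\<lambda>z. f (fst z)) summable_on (\<lambda>x. (x, x \<otimes> u)) ` carrier G"
      using assms(3) by (simp add: summable_on_reindex o_def)
  qed
qed

lemma in_lp_busemann_cocycle:
  assumes M: "metric_on (carrier G) d" and SH: "strongly_hyperbolic (carrier G) d"
    and LI: "left_invariant G d" and ball: "finite {u\<in>carrier G. d \<one> u \<le> s}"
    and p: "0 \<le> p" and growth: "(\<lambda>x. exp (- p * d \<one> x)) summable_on carrier G"
    and g: "g \<in> carrier G"
  shows "in_lp p (dist_band G d r s) (busemann_cocycle G d g)"
proof -
  define B where "B = exp (d \<one> g + s) powr p"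
  have "(\<lambda>z. B * exp (- p * d \<one> (fst z))) summable_on dist_band G d r s"
    using summable_on_dist_band[OF LI ball growth] by (rule summable_on_cmult_right)
  moreover have "\<bar>busemann_cocycle G d g z\<bar> powr p \<le> B * exp (- p * d \<one> (fst z))"
    if "z \<in> dist_band G d r s" for z
  proof -
    obtain x y where z: "z = (x, y)"
      by (cases z)
    have "\<bar>busemann_cocycle G d g z\<bar> powr p \<le> (exp (d \<one> g + s) * exp (- d \<one> x)) powr p"
      using busemann_cocycle_abs_le[OF M SH g] that p z by (intro powr_mono2) auto
    also have "\<dots> = B * exp (- p * d \<one> x)"
      by (simp add: B_def powr_mult exp_powr_real mult.commute)
    finally show ?thesis
      by (simp add: z)
  qed
  ultimately show ?thesis
    unfolding in_lp_def by (rule summable_on_comparison_nonneg) auto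
qed

lemma rough_geodesic_band_pairs:
  assumes M: "metric_on (carrier G) d" and C: "0 \<le> C" "2 * C < K"
    and geo: "a \<le> b" "\<gamma> a = \<one>" "\<gamma> b = g" "\<gamma> ` {a..b} \<subseteq> carrier G"
    and rg: "\<And>s t. s \<in> {a..b} \<Longrightarrow> t \<in> {a..b} \<Longrightarrow>
      \<bar>s - t\<bar> - C \<le> d (\<gamma> s) (\<gamma> t) \<and> d (\<gamma> s) (\<gamma> t) \<le> \<bar>s - t\<bar> + C"
  obtains P where "P \<subseteq> dist_band G d (K - C) (K + C)" and "finite P"
    and "b - a < K * (card P + 1)"
    and "\<And>z. z \<in> P \<Longrightarrow> K - 2 * C \<le> \<bar>busemann_cocycle G d g z\<bar>"
proof -
  have K: "K > 0"
    using C by simp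
  define n where "n = nat \<lfloor>(b - a) / K\<rfloor>"
  define t where "t i = a + real i * K" for i
  define pair where "pair i = (\<gamma> (t i), \<gamma> (t (Suc i)))" for i
  have "real n \<le> (b - a) / K" and n_gt: "(b - a) / K < real n + 1"
    using geo(1) K by (simp_all add: n_def)
  then have n_le: "real n * K \<le> b - a"
    using K by (simp add: pos_le_divide_eq)
  have t_mem: "t i \<in> {a..b}" if "i \<le> n" for i
  proof -
    have "0 \<le> real i * K" and "real i * K \<le> real n * K"
      using that K by (auto intro: mult_right_mono)
    then show ?thesis
      using n_le unfolding t_def atLeastAtMost_iff by linarith
  qed
  have t_diff: "\<bar>t i - t j\<bar> = (real j - real i) * K" if "i \<le> j" for i j
    using that K by (simp add: t_def algebra_simps)
  have distinct: "\<gamma> (t i) \<noteq> \<gamma> (t j)" if "i < j" "j \<le> n" for i j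
  proof (rule rough_geodesic_distinct[OF M geo(4) _ t_mem t_mem])
    show "\<bar>s - t'\<bar> - C \<le> d (\<gamma> s) (\<gamma> t')" if "s \<in> {a..b}" "t' \<in> {a..b}" for s t'
      using rg[OF that] by simp
    have "K \<le> \<bar>t i - t j\<bar>"
      using t_diff[of i j] that K mult_right_mono[of 1 "real j - real i" K] by simp
    then show "C < \<bar>t i - t j\<bar>"
      using C by linarith
  qed (use that in auto)
  have inj: "inj_on pair {..<n}"
  proof (rule inj_onI)
    fix i j assume "i \<in> {..<n}" "j \<in> {..<n}" "pair i = pair j"
    then show "i = j"
      using distinct[of i j] distinct[of j i] by (cases i j rule: linorder_cases) (auto simp: pair_def)
  qed
  have step: "t (Suc i) - t i = K" for i
    by (simp add: t_def algebra_simps)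
  have "pair i \<in> dist_band G d (K - C) (K + C)" if "i < n" for i
    unfolding pair_def using step[of i] K that
    by (intro rough_geodesic_pair_in_dist_band[OF geo(4) rg t_mem t_mem]) auto
  moreover have "K - 2 * C \<le> \<bar>busemann_cocycle G d g (pair i)\<bar>" if "i < n" for i
    using busemann_cocycle_along_rough_geodesic[OF geo(2,3) rg t_mem t_mem, of i "Suc i"] step[of i] K that
    by (simp add: pair_def)
  moreover have "b - a < K * (card (pair ` {..<n}) + 1)"
    using n_gt K by (simp add: card_image[OF inj] field_simps)
  ultimately show ?thesis
    using that[of "pair ` {..<n}"] by blast
qed

lemma finite_busemann_cocycle_lp_norm_le:
  assumes S: "finite_generating_set G S" and QI: "quasi_isometric_metrics (carrier G) d (word_metric G S)"
    and M: "metric_on (carrier G) d" and C: "0 \<le> C" "2 * C < K"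
    and RG: "roughly_geodesic (carrier G) d C" and p: "0 < p"
    and lp: "\<And>g. g \<in> carrier G \<Longrightarrow> in_lp p (dist_band G d (K - C) (K + C)) (busemann_cocycle G d g)"
  shows "finite {g\<in>carrier G. lp_norm p (dist_band G d (K - C) (K + C)) (busemann_cocycle G d g) \<le> R}"
proof -
  define Q where "Q = max R 0 powr p / (K - 2 * C) powr p"
  have "{g\<in>carrier G. lp_norm p (dist_band G d (K - C) (K + C)) (busemann_cocycle G d g) \<le> R}
    \<subseteq> {g\<in>carrier G. d \<one> g \<le> K * (Q + 1) + C}"
  proof safe
    fix g assume g: "g \<in> carrier G"
      and norm_le: "lp_norm p (dist_band G d (K - C) (K + C)) (busemann_cocycle G d g) \<le> R"
    obtain a b \<gamma> where geo: "a \<le> b" "\<gamma> a = \<one>" "\<gamma> b = g" "\<gamma> ` {a..b} \<subseteq> carrier G"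
      and rg_all: "\<forall>s\<in>{a..b}. \<forall>t\<in>{a..b}.
        \<bar>s - t\<bar> - C \<le> d (\<gamma> s) (\<gamma> t) \<and> d (\<gamma> s) (\<gamma> t) \<le> \<bar>s - t\<bar> + C"
      using RG[unfolded roughly_geodesic_def, rule_format, OF one_closed g] by auto
    have rg: "\<bar>s - t\<bar> - C \<le> d (\<gamma> s) (\<gamma> t) \<and> d (\<gamma> s) (\<gamma> t) \<le> \<bar>s - t\<bar> + C"
      if "s \<in> {a..b}" "t \<in> {a..b}" for s t
      using rg_all that by blast
    obtain P where P: "P \<subseteq> dist_band G d (K - C) (K + C)" "finite P" "b - a < K * (card P + 1)"
      and large: "\<And>z. z \<in> P \<Longrightarrow> K - 2 * C \<le> \<bar>busemann_cocycle G d g z\<bar>"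
      using rough_geodesic_band_pairs[OF M C geo rg] by blast
    have "real (card P) * (K - 2 * C) powr p = (\<Sum>z\<in>P. (K - 2 * C) powr p)"
      by simp
    also have "\<dots> \<le> (\<Sum>z\<in>P. \<bar>busemann_cocycle G d g z\<bar> powr p)"
      using large C p by (intro sum_mono powr_mono2) auto
    also have "\<dots> \<le> lp_norm p (dist_band G d (K - C) (K + C)) (busemann_cocycle G d g) powr p"
      using sum_powr_le_lp_norm_powr[OF p lp[OF g] P(2,1)] .
    also have "\<dots> \<le> max R 0 powr p"
      using norm_le p by (intro powr_mono2) (auto simp: lp_norm_def)
    finally have "real (card P) \<le> Q"
      using C by (simp add: Q_def pos_le_divide_eq)
    then have "K * (card P + 1) \<le> K * (Q + 1)"
      using C by (intro mult_left_mono) auto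
    moreover have "d \<one> g \<le> b - a + C"
      using rg[of a b] geo by simp
    ultimately show "d \<one> g \<le> K * (Q + 1) + C"
      using P(3) by linarith
  qed
  then show ?thesis
    using finite_dist_one_le[OF S QI] by (rule finite_subset)
qed

end

theorem mainTheorem2:
  fixes G :: "'a monoid" and d :: "'a \<Rightarrow> 'a \<Rightarrow> real" and C K :: real
  assumes "group G"
    and "non_elementary_hyperbolic G"
    and "admissible_metric G d"
    and "strongly_hyperbolic (carrier G) d"
    and "C \<ge> 0" and "roughly_geodesic (carrier G) d C"
    and "K > 2 * C"
  defines "\<Delta> \<equiv> {(x, y). x \<in> carrier G \<and> y \<in> carrier G \<and> K - C \<le> d x y \<and> d x y \<le> K + C}"
  shows "\<exists>p0\<ge>1. \<forall>p\<ge>p0.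
           (\<forall>g\<in>carrier G. in_lp p \<Delta> (busemann_cocycle G d g))
         \<and> (\<forall>g\<in>carrier G. \<forall>\<phi>. in_lp p \<Delta> \<phi> \<longrightarrow> in_lp p \<Delta> (affine_action G d g \<phi>))
         \<and> (\<forall>\<phi>. \<forall>z\<in>\<Delta>. affine_action G d \<one>\<^bsub>G\<^esub> \<phi> z = \<phi> z)
         \<and> (\<forall>g\<in>carrier G. \<forall>h\<in>carrier G. \<forall>\<phi>. \<forall>z\<in>\<Delta>.
               affine_action G d (g \<otimes>\<^bsub>G\<^esub> h) \<phi> z = affine_action G d g (affine_action G d h \<phi>) z)
         \<and> (\<forall>g\<in>carrier G. \<forall>\<phi> \<psi>. in_lp p \<Delta> \<phi> \<longrightarrow> in_lp p \<Delta> \<psi> \<longrightarrow>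
               lp_norm p \<Delta> (\<lambda>z. affine_action G d g \<phi> z - affine_action G d g \<psi> z) = lp_norm p \<Delta> (\<lambda>z. \<phi> z - \<psi> z))
         \<and> (\<forall>R. finite {g \<in> carrier G. lp_norm p \<Delta> (busemann_cocycle G d g) \<le> R})"
proof -
  interpret group G by fact
  obtain S where M: "metric_on (carrier G) d" and LI: "left_invariant G d"
    and S: "finite_generating_set G S" and QI: "quasi_isometric_metrics (carrier G) d (word_metric G S)"
    using assms(3) unfolding admissible_metric_def by blast
  obtain p0 where p0: "p0 \<ge> 1"
    and growth: "\<And>p. p \<ge> p0 \<Longrightarrow> (\<lambda>x. exp (- p * d \<one>\<^bsub>G\<^esub> x)) summable_on carrier G"
    using summable_exp_neg_dist_one[OF S QI] by blast
  have \<Delta>: "\<Delta> = dist_band G d (K - C) (K + C)"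
    unfolding \<Delta>_def dist_band_def ..
  have pairs: "\<Delta> \<subseteq> carrier G \<times> carrier G"
    unfolding \<Delta>_def by auto
  have shift: "bij_betw (pair_shift G (inv\<^bsub>G\<^esub> g)) \<Delta> \<Delta>" if "g \<in> carrier G" for g
    unfolding \<Delta> using bij_betw_pair_shift_dist_band[OF LI] that by simp
  have cocycle: "in_lp p \<Delta> (busemann_cocycle G d g)" if "p \<ge> p0" "g \<in> carrier G" for p g
    unfolding \<Delta> using that p0 finite_dist_one_le[OF S QI]
    by (intro in_lp_busemann_cocycle[OF M assms(4) LI] growth) auto
  have proper: "finite {g\<in>carrier G. lp_norm p \<Delta> (busemann_cocycle G d g) \<le> R}" if "p \<ge> p0" for p R
    using cocycle[OF that] that p0 unfolding \<Delta>
    by (intro finite_busemann_cocycle_lp_norm_le[OF S QI M assms(5,7,6)]) auto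
  have affine_lp: "in_lp p \<Delta> (affine_action G d g \<phi>)" if "p \<ge> p0" "g \<in> carrier G" "in_lp p \<Delta> \<phi>" for p g \<phi>
    unfolding affine_action_def using that p0
    by (intro in_lp_add in_lp_pair_translate shift cocycle) auto
  have affine_one: "affine_action G d \<one>\<^bsub>G\<^esub> \<phi> z = \<phi> z" if "z \<in> \<Delta>" for \<phi> z
    using affine_action_one[OF M] pairs that by blast
  have affine_mult: "affine_action G d (g \<otimes>\<^bsub>G\<^esub> h) \<phi> z = affine_action G d g (affine_action G d h \<phi>) z"
    if "g \<in> carrier G" "h \<in> carrier G" "z \<in> \<Delta>" for g h \<phi> z
    using affine_action_mult[OF LI that(1,2)] pairs that(3) by blast
  have isometry: "lp_norm p \<Delta> (\<lambda>z. affine_action G d g \<phi> z - affine_action G d g \<psi> z)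
      = lp_norm p \<Delta> (\<lambda>z. \<phi> z - \<psi> z)" if "g \<in> carrier G" for p g \<phi> \<psi>
    unfolding affine_action_diff using lp_norm_pair_translate[OF shift[OF that]] .
  show ?thesis
    using p0 cocycle affine_lp affine_one affine_mult isometry proper by (intro exI[of _ p0]) auto
qed

end
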